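(* Let $G$ be an elementary abelian $2$-group (an $\mathbb{F}_2$-vector space) and let $T\subseteq G$ be a generating subset of $G$ with $0\in T$. Let $\mathcal{U}$ be the group with presentation $$\mathcal{U}=\big\langle (t^{\mathcal U})_{t\in T}\;\big|\;(t^{\mathcal U})^2=1,\ t^{\mathcal U}s^{\mathcal U}(t^{\mathcal U})^{-1}=(2t-s)^{\mathcal U}\text{ for all } s,t\in T\big\rangle,$$ let $\mathcal{W}$ be the subgroup generated by $\{(0,t,-1)\mid t\in T\}$ of the group $(G\wedge G)\times G\times\{1,-1\}$ with multiplication $(l,g,v)(l',g',v')=(l+l'+g\wedge(vg'),\,g+vg',\,vv')$, and let $\phi:\mathcal U\to\mathcal W$ be the group homomorphism determined by $t^{\mathcal U}\mapsto(0,t,-1)$. Then: (1) $\phi$ is injective if $T\setminus\{0\}$ is a basis of $G$; (2) if $G$ has finite dimension $n$ over $\mathbb{F}_2$ and $|T\setminus\{0\}|>\frac{n(n+1)}{2}$, then $\phi$ is not injective; (3) if $T=G$, then $\phi$ is an isomorphism if and only if $\dim_{\mathbb{F}_2}(G)\le 2$.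
   Context: Since $2s=0$ in $G$, the relation in $\mathcal U$ reads $t^{\mathcal U}s^{\mathcal U}(t^{\mathcal U})^{-1}=s^{\mathcal U}$. The homomorphism $\phi$ exists since the elements $(0,t,-1)$ satisfy the defining relations of $\mathcal U$, and it is surjective by construction. *)

theory Defs
  imports "HOL-Algebra.Algebra" "HOL-Algebra.Free_Abelian_Groups"
begin

text \<open>G is an HOL-Algebra group written multiplicatively: the paper's 0 is the unit,
  the paper's + is the group product.\<close>

definition elem_abelian_2group :: "('g, 'b) monoid_scheme \<Rightarrow> bool" where
  "elem_abelian_2group G \<longleftrightarrow> comm_group G \<and> (\<forall>x\<in>carrier G. x \<otimes>\<^bsub>G\<^esub> x = \<one>\<^bsub>G\<^esub>)"

definition f2_independent :: "('g, 'b) monoid_scheme \<Rightarrow> 'g set \<Rightarrow> bool" where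
  "f2_independent G B \<longleftrightarrow> B \<subseteq> carrier G \<and>
     (\<forall>S. finite S \<and> S \<subseteq> B \<and> S \<noteq> {} \<longrightarrow> finprod G (\<lambda>x. x) S \<noteq> \<one>\<^bsub>G\<^esub>)"

definition f2_basis :: "('g, 'b) monoid_scheme \<Rightarrow> 'g set \<Rightarrow> bool" where
  "f2_basis G B \<longleftrightarrow> f2_independent G B \<and> generate G B = carrier G"

definition f2_dim :: "('g, 'b) monoid_scheme \<Rightarrow> nat \<Rightarrow> bool" where
  "f2_dim G n \<longleftrightarrow> (\<exists>B. f2_basis G B \<and> finite B \<and> card B = n)"

definition wedge_free :: "('g, 'b) monoid_scheme \<Rightarrow> ('g \<times> 'g \<Rightarrow>\<^sub>0 int) monoid" where
  "wedge_free G = free_Abelian_group (carrier G \<times> carrier G)"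

definition wedge_relators :: "('g, 'b) monoid_scheme \<Rightarrow> ('g \<times> 'g \<Rightarrow>\<^sub>0 int) set" where
  "wedge_relators G =
     {frag_of (a \<otimes>\<^bsub>G\<^esub> b, c) - frag_of (a, c) - frag_of (b, c) | a b c.
        a \<in> carrier G \<and> b \<in> carrier G \<and> c \<in> carrier G}
   \<union> {frag_of (a, b \<otimes>\<^bsub>G\<^esub> c) - frag_of (a, b) - frag_of (a, c) | a b c.
        a \<in> carrier G \<and> b \<in> carrier G \<and> c \<in> carrier G}
   \<union> {frag_of (a, a) | a. a \<in> carrier G}"

definition ext_square :: "('g, 'b) monoid_scheme \<Rightarrow> ('g \<times> 'g \<Rightarrow>\<^sub>0 int) set monoid" where
  "ext_square G = wedge_free G Mod generate (wedge_free G) (wedge_relators G)"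

definition wedge :: "('g, 'b) monoid_scheme \<Rightarrow> 'g \<Rightarrow> 'g \<Rightarrow> ('g \<times> 'g \<Rightarrow>\<^sub>0 int) set" where
  "wedge G a b = generate (wedge_free G) (wedge_relators G) #>\<^bsub>wedge_free G\<^esub> frag_of (a, b)"

definition sgn_act :: "('g, 'b) monoid_scheme \<Rightarrow> int \<Rightarrow> 'g \<Rightarrow> 'g" where
  "sgn_act G v g = (if v = 1 then g else inv\<^bsub>G\<^esub> g)"

definition big_mult :: "('g, 'b) monoid_scheme \<Rightarrow>
    ('g \<times> 'g \<Rightarrow>\<^sub>0 int) set \<times> 'g \<times> int \<Rightarrow>
    ('g \<times> 'g \<Rightarrow>\<^sub>0 int) set \<times> 'g \<times> int \<Rightarrow>
    ('g \<times> 'g \<Rightarrow>\<^sub>0 int) set \<times> 'g \<times> int" where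
  "big_mult G x y = (case x of (l, g, v) \<Rightarrow> case y of (l', g', v') \<Rightarrow>
        (l \<otimes>\<^bsub>ext_square G\<^esub> l' \<otimes>\<^bsub>ext_square G\<^esub> wedge G g (sgn_act G v g'),
         g \<otimes>\<^bsub>G\<^esub> sgn_act G v g', v * v'))"

definition big_group ::
  "('g, 'b) monoid_scheme \<Rightarrow> (('g \<times> 'g \<Rightarrow>\<^sub>0 int) set \<times> 'g \<times> int) monoid" where
  "big_group G = \<lparr>carrier = carrier (ext_square G) \<times> carrier G \<times> {1, -1},
     monoid.mult = big_mult G,
     one = (\<one>\<^bsub>ext_square G\<^esub>, \<one>\<^bsub>G\<^esub>, 1)\<rparr>"

definition W_gen :: "('g, 'b) monoid_scheme \<Rightarrow> 'g \<Rightarrow> ('g \<times> 'g \<Rightarrow>\<^sub>0 int) set \<times> 'g \<times> int" where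
  "W_gen G t = (\<one>\<^bsub>ext_square G\<^esub>, t, -1)"

definition W_group ::
  "('g, 'b) monoid_scheme \<Rightarrow> 'g set \<Rightarrow> (('g \<times> 'g \<Rightarrow>\<^sub>0 int) set \<times> 'g \<times> int) monoid" where
  "W_group G T = subgroup_generated (big_group G) (W_gen G ` T)"

text \<open>Words: lists of letters (x, b); b = True means the formal inverse of x.
  pres_eq R is the congruence on words generated by free cancellation and
  deletion/insertion of relators from R.\<close>

inductive pres_eq :: "('a \<times> bool) list set \<Rightarrow> ('a \<times> bool) list \<Rightarrow> ('a \<times> bool) list \<Rightarrow> bool"
  for R where
  refl: "pres_eq R w w"
| sym: "pres_eq R w w' \<Longrightarrow> pres_eq R w' w"
| trans: "pres_eq R u v \<Longrightarrow> pres_eq R v w \<Longrightarrow> pres_eq R u w"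
| cancel: "pres_eq R (u @ [(x, b), (x, \<not> b)] @ v) (u @ v)"
| relator: "r \<in> R \<Longrightarrow> pres_eq R (u @ r @ v) (u @ v)"

definition word_class :: "'a set \<Rightarrow> ('a \<times> bool) list set \<Rightarrow> ('a \<times> bool) list \<Rightarrow> ('a \<times> bool) list set" where
  "word_class Xs Rs w = {w'. set w' \<subseteq> Xs \<times> (UNIV::bool set) \<and> pres_eq Rs w w'}"

definition presented_group :: "'a set \<Rightarrow> ('a \<times> bool) list set \<Rightarrow> ('a \<times> bool) list set monoid" where
  "presented_group Xs R = \<lparr>carrier = word_class Xs R ` {w. set w \<subseteq> Xs \<times> UNIV},
     monoid.mult = (\<lambda>A B. word_class Xs R ((SOME a. a \<in> A) @ (SOME b. b \<in> B))),
     one = word_class Xs R []\<rparr>"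

definition eval_word :: "('c, 'd) monoid_scheme \<Rightarrow> ('a \<Rightarrow> 'c) \<Rightarrow> ('a \<times> bool) list \<Rightarrow> 'c" where
  "eval_word H f w = foldr (\<lambda>(x, b) acc. (if b then inv\<^bsub>H\<^esub> (f x) else f x) \<otimes>\<^bsub>H\<^esub> acc) w \<one>\<^bsub>H\<^esub>"

definition induced_hom :: "('c, 'd) monoid_scheme \<Rightarrow> ('a \<Rightarrow> 'c) \<Rightarrow> ('a \<times> bool) list set \<Rightarrow> 'c" where
  "induced_hom H f A = eval_word H f (SOME w. w \<in> A)"

text \<open>Relators (t^U)^2 and t^U s^U (t^U)^{-1} ((2t-s)^U)^{-1}, where 2t - s is t + t - s.\<close>
definition U_relators :: "('g, 'b) monoid_scheme \<Rightarrow> 'g set \<Rightarrow> ('g \<times> bool) list set" where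
  "U_relators G T = {[(t, False), (t, False)] | t. t \<in> T}
     \<union> {[(t, False), (s, False), (t, True), (t \<otimes>\<^bsub>G\<^esub> t \<otimes>\<^bsub>G\<^esub> inv\<^bsub>G\<^esub> s, True)] | t s. t \<in> T \<and> s \<in> T}"

definition U_group :: "('g, 'b) monoid_scheme \<Rightarrow> 'g set \<Rightarrow> ('g \<times> bool) list set monoid" where
  "U_group G T = presented_group T (U_relators G T)"

definition phi_map :: "('g, 'b) monoid_scheme \<Rightarrow> 'g set \<Rightarrow> ('g \<times> bool) list set \<Rightarrow> ('g \<times> 'g \<Rightarrow>\<^sub>0 int) set \<times> 'g \<times> int" where
  "phi_map G T = induced_hom (W_group G T) (W_gen G)"

end

theory Submission
  imports Defs
begin

text \<open>Since \<open>2t - s = s\<close> in \<open>G\<close>, the relations of \<open>\<U>\<close> only say that the generators are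
  commuting involutions, so the class of a word is determined by the set \<open>P \<subseteq> T\<close> of letters
  occurring an odd number of times. The image of that word in \<open>\<W>\<close> is
  \<open>(\<lambda>, \<Sum>P, (-1)\<^bsup>|P|\<^esup>)\<close> with \<open>\<lambda>\<close> in the span of the wedges of the letters, so \<open>\<phi>\<close> is surjective,
  and it is injective iff no nonempty \<open>P\<close> of even size with \<open>\<Sum>P = 0\<close> has trivial wedge part.
  (1) If \<open>T - {0}\<close> is a basis, \<open>\<Sum>P = 0\<close> already forces \<open>P \<subseteq> {0}\<close>.
  (2) If \<open>G\<close> has a basis \<open>B\<close> of size \<open>n\<close>, the image of \<open>\<phi>\<close> lies in
  \<open>span{b \<and> b'} \<times> G \<times> {\<plusminus>1}\<close>, of size at most \<open>2\<^bsup>C(n,2) + n + 1\<^esup>\<close>, while \<open>\<U>\<close> has \<open>2\<^bsup>|T|\<^esup>\<close>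
  elements. (3) For \<open>T = G\<close> of dimension at least 3, the same count on the 8 elements spanned by
  three independent vectors gives \<open>2\<^sup>8 \<le> 2\<^sup>7\<close>. In dimension at most 1, \<open>T - {0}\<close> is a basis; in
  dimension 2 the only candidate is \<open>P = G\<close>, whose wedge part is \<open>a \<and> b \<noteq> 0\<close>, as the
  determinant mod 2 of the coordinates is an alternating bilinear form that is 1 on \<open>(a, b)\<close>.\<close>

locale ea2_group =
  fixes G :: "('g, 'b) monoid_scheme" (structure)
  assumes elem_abelian: "elem_abelian_2group G"
begin

lemma is_comm_group: "comm_group G"
  using elem_abelian by (simp add: elem_abelian_2group_def)

sublocale comm_group G by (rule is_comm_group)

lemma square_eq_one [simp]: "x \<in> carrier G \<Longrightarrow> x \<otimes> x = \<one>"
  using elem_abelian by (simp add: elem_abelian_2group_def)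

lemma mult_self_cancel [simp]: "x \<in> carrier G \<Longrightarrow> y \<in> carrier G \<Longrightarrow> x \<otimes> (x \<otimes> y) = y"
  by (simp flip: m_assoc)

lemma inv_eq_self [simp]: "x \<in> carrier G \<Longrightarrow> inv x = x"
  by (rule inv_equality) auto

lemma sgn_act_eq [simp]: "g \<in> carrier G \<Longrightarrow> sgn_act G v g = g"
  by (simp add: sgn_act_def)

lemma mult_ne_one:
  assumes "a \<in> carrier G" "b \<in> carrier G" "a \<noteq> b"
  shows "a \<otimes> b \<noteq> \<one>"
proof
  assume "a \<otimes> b = \<one>"
  then show False using assms inv_equality[of a b] by simp
qed

section \<open>The exterior square\<close>

abbreviation "WF \<equiv> wedge_free G"
abbreviation "WN \<equiv> generate WF (wedge_relators G)"
abbreviation "Ext \<equiv> ext_square G"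

definition wclass :: "('g \<times> 'g \<Rightarrow>\<^sub>0 int) \<Rightarrow> ('g \<times> 'g \<Rightarrow>\<^sub>0 int) set" where
  "wclass c = WN #>\<^bsub>WF\<^esub> c"

lemma comm_group_wedge_free: "comm_group WF"
  by (simp add: wedge_free_def abelian_free_Abelian_group)

lemma group_wedge_free: "group WF"
  by (simp add: wedge_free_def)

lemma carrier_wedge_free: "c \<in> carrier WF \<longleftrightarrow> Poly_Mapping.keys c \<subseteq> carrier G \<times> carrier G"
  by (simp add: wedge_free_def)

lemma wedge_free_mult [simp]: "c \<otimes>\<^bsub>WF\<^esub> d = c + d"
  by (simp add: wedge_free_def)

lemma wedge_free_one [simp]: "\<one>\<^bsub>WF\<^esub> = 0"
  by (simp add: wedge_free_def)

lemma wedge_free_inv [simp]: "c \<in> carrier WF \<Longrightarrow> inv\<^bsub>WF\<^esub> c = - c"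
  by (simp add: wedge_free_def)

lemma frag_of_in_wedge_free [simp]:
  "a \<in> carrier G \<Longrightarrow> b \<in> carrier G \<Longrightarrow> frag_of (a, b) \<in> carrier WF"
  by (simp add: carrier_wedge_free)

lemma add_in_wedge_free [simp]: "c \<in> carrier WF \<Longrightarrow> d \<in> carrier WF \<Longrightarrow> c + d \<in> carrier WF"
  using keys_add[of c d] by (auto simp: carrier_wedge_free)

lemma uminus_in_wedge_free [simp]: "c \<in> carrier WF \<Longrightarrow> - c \<in> carrier WF"
  by (simp add: carrier_wedge_free)

lemma diff_in_wedge_free [simp]: "c \<in> carrier WF \<Longrightarrow> d \<in> carrier WF \<Longrightarrow> c - d \<in> carrier WF"
  using keys_diff[of c d] by (auto simp: carrier_wedge_free)

lemma zero_in_wedge_free [simp]: "0 \<in> carrier WF"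
  by (simp add: carrier_wedge_free)

lemma wedge_relators_subset: "wedge_relators G \<subseteq> carrier WF"
  unfolding wedge_relators_def by (blast intro: diff_in_wedge_free frag_of_in_wedge_free m_closed)

lemma subgroup_wedge_rels: "subgroup WN WF"
  by (rule group.generate_is_subgroup[OF group_wedge_free wedge_relators_subset])

lemma wedge_rels_add: "c \<in> WN \<Longrightarrow> d \<in> WN \<Longrightarrow> c + d \<in> WN"
  by (metis wedge_free_mult generate.eng)

lemma wedge_rels_uminus: "c \<in> WN \<Longrightarrow> - c \<in> WN"
  by (metis subgroup.mem_carrier subgroup_wedge_rels wedge_free_inv subgroup.m_inv_closed)

lemma wedge_rels_diff: "c \<in> WN \<Longrightarrow> d \<in> WN \<Longrightarrow> c - d \<in> WN"
  by (metis wedge_rels_add wedge_rels_uminus diff_conv_add_uminus)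

lemma wedge_rel_left:
  "a \<in> carrier G \<Longrightarrow> b \<in> carrier G \<Longrightarrow> c \<in> carrier G \<Longrightarrow>
   frag_of (a \<otimes> b, c) - frag_of (a, c) - frag_of (b, c) \<in> WN"
  by (rule generate.incl) (unfold wedge_relators_def, blast)

lemma wedge_rel_right:
  "a \<in> carrier G \<Longrightarrow> b \<in> carrier G \<Longrightarrow> c \<in> carrier G \<Longrightarrow>
   frag_of (a, b \<otimes> c) - frag_of (a, b) - frag_of (a, c) \<in> WN"
  by (rule generate.incl) (unfold wedge_relators_def, blast)

lemma wedge_rel_diag: "a \<in> carrier G \<Longrightarrow> frag_of (a, a) \<in> WN"
  by (rule generate.incl) (unfold wedge_relators_def, blast)

lemma wedge_rel_one_left: assumes "b \<in> carrier G" shows "frag_of (\<one>, b) \<in> WN"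
proof -
  have "- frag_of (\<one>, b) \<in> WN"
    using wedge_rel_left[of \<one> \<one> b] assms by simp
  thus ?thesis by (metis wedge_rels_uminus minus_minus)
qed

lemma wedge_rel_one_right: assumes "b \<in> carrier G" shows "frag_of (b, \<one>) \<in> WN"
proof -
  have "- frag_of (b, \<one>) \<in> WN"
    using wedge_rel_right[of b \<one> \<one>] assms by simp
  thus ?thesis by (metis wedge_rels_uminus minus_minus)
qed

text \<open>Expand \<open>(a + b) \<and> (a + b) = 0\<close> and use \<open>b \<and> 2a = 0\<close>.\<close>
lemma wedge_rel_swap:
  assumes a: "a \<in> carrier G" and b: "b \<in> carrier G"
  shows "frag_of (a, b) - frag_of (b, a) \<in> WN"
proof -
  let ?ab = "a \<otimes> b"
  have diag: "frag_of (?ab, ?ab) \<in> WN" "frag_of (a, a) \<in> WN" "frag_of (b, b) \<in> WN"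
    using a b wedge_rel_diag[of ?ab] by (simp_all add: wedge_rel_diag)
  have left: "frag_of (?ab, ?ab) - frag_of (a, ?ab) - frag_of (b, ?ab) \<in> WN"
    using a b wedge_rel_left[of a b ?ab] by simp
  have right: "frag_of (a, ?ab) - frag_of (a, a) - frag_of (a, b) \<in> WN"
    "frag_of (b, ?ab) - frag_of (b, a) - frag_of (b, b) \<in> WN"
    "frag_of (b, a \<otimes> a) - frag_of (b, a) - frag_of (b, a) \<in> WN"
    using a b wedge_rel_right[of a a b] wedge_rel_right[of b a b] wedge_rel_right[of b a a] by auto
  have "frag_of (b, a \<otimes> a) \<in> WN"
    using a b by (simp add: wedge_rel_one_right)
  note rels = diag left right this
  have "frag_of (a, b) - frag_of (b, a) =
    ((((frag_of (?ab, ?ab) - (frag_of (?ab, ?ab) - frag_of (a, ?ab) - frag_of (b, ?ab)))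
      - (frag_of (a, ?ab) - frag_of (a, a) - frag_of (a, b)))
      - (frag_of (b, ?ab) - frag_of (b, a) - frag_of (b, b))) - frag_of (a, a) - frag_of (b, b))
    - (frag_of (b, a \<otimes> a) - (frag_of (b, a \<otimes> a) - frag_of (b, a) - frag_of (b, a)))"
    by (simp add: algebra_simps)
  also have "\<dots> \<in> WN"
    by (rule wedge_rels_diff[OF wedge_rels_diff[OF wedge_rels_diff[OF wedge_rels_diff[OF
          wedge_rels_diff[OF wedge_rels_diff[OF rels(1,4)] rels(5)] rels(6)] rels(2)] rels(3)]
          wedge_rels_diff[OF rels(8,7)]])
  finally show ?thesis .
qed

lemma carrier_ext_square: "carrier Ext = wclass ` carrier WF"
  by (simp add: ext_square_def carrier_FactGroup wclass_def)

lemma wclass_in_ext_square [simp]: "c \<in> carrier WF \<Longrightarrow> wclass c \<in> carrier Ext"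
  by (simp add: carrier_ext_square)

lemma wclass_add: "c \<in> carrier WF \<Longrightarrow> d \<in> carrier WF \<Longrightarrow> wclass c \<otimes>\<^bsub>Ext\<^esub> wclass d = wclass (c + d)"
  unfolding wclass_def ext_square_def
  using normal.rcos_sum[OF comm_group.subgroup_imp_normal[OF comm_group_wedge_free subgroup_wedge_rels]]
  by simp

lemma wclass_zero: "wclass 0 = \<one>\<^bsub>Ext\<^esub>"
  unfolding wclass_def ext_square_def
  by (metis group.coset_mult_one[OF group_wedge_free] subgroup_wedge_rels subgroup.subset
      wedge_free_one one_FactGroup)

lemma wclass_eq_iff:
  assumes "c \<in> carrier WF" "d \<in> carrier WF"
  shows "wclass c = wclass d \<longleftrightarrow> c - d \<in> WN"
proof -
  have "wclass c = wclass d \<longleftrightarrow> c \<in> WN #>\<^bsub>WF\<^esub> d"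
    unfolding wclass_def
    using group.repr_independenceD[OF group_wedge_free subgroup_wedge_rels assms(1)]
      group.repr_independence[OF group_wedge_free _ assms(2) subgroup_wedge_rels]
    by blast
  also have "\<dots> \<longleftrightarrow> c \<otimes>\<^bsub>WF\<^esub> inv\<^bsub>WF\<^esub> d \<in> WN"
    using subgroup.rcos_module_imp[OF subgroup_wedge_rels group_wedge_free assms(2)]
      subgroup.rcos_module_rev[OF subgroup_wedge_rels group_wedge_free assms(2,1)]
    by blast
  finally show ?thesis using assms by simp
qed

lemma wclass_eq_one_iff: "c \<in> carrier WF \<Longrightarrow> wclass c = \<one>\<^bsub>Ext\<^esub> \<longleftrightarrow> c \<in> WN"
  using wclass_eq_iff[of c 0] by (simp flip: wclass_zero)

lemma wedge_eq_wclass: "wedge G a b = wclass (frag_of (a, b))"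
  by (simp add: wedge_def wclass_def)

lemma comm_group_ext_square: "comm_group Ext"
proof (rule group.group_comm_groupI)
  show "group Ext"
    unfolding ext_square_def
    by (rule normal.factorgroup_is_group[OF
          comm_group.subgroup_imp_normal[OF comm_group_wedge_free subgroup_wedge_rels]])
next
  fix x y assume "x \<in> carrier Ext" "y \<in> carrier Ext"
  then obtain c d where "x = wclass c" "y = wclass d" "c \<in> carrier WF" "d \<in> carrier WF"
    by (auto simp: carrier_ext_square)
  thus "x \<otimes>\<^bsub>Ext\<^esub> y = y \<otimes>\<^bsub>Ext\<^esub> x" by (simp add: wclass_add add.commute)
qed

lemma wedge_in_ext_square [simp]: "a \<in> carrier G \<Longrightarrow> b \<in> carrier G \<Longrightarrow> wedge G a b \<in> carrier Ext"
  by (simp add: wedge_eq_wclass)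

lemma wedge_mult_left:
  assumes "a \<in> carrier G" "a' \<in> carrier G" "b \<in> carrier G"
  shows "wedge G (a \<otimes> a') b = wedge G a b \<otimes>\<^bsub>Ext\<^esub> wedge G a' b"
  using assms wedge_rel_left[of a a' b]
  by (simp add: wedge_eq_wclass wclass_add wclass_eq_iff diff_diff_eq)

lemma wedge_mult_right:
  assumes "a \<in> carrier G" "b \<in> carrier G" "b' \<in> carrier G"
  shows "wedge G a (b \<otimes> b') = wedge G a b \<otimes>\<^bsub>Ext\<^esub> wedge G a b'"
  using assms wedge_rel_right[of a b b']
  by (simp add: wedge_eq_wclass wclass_add wclass_eq_iff diff_diff_eq)

lemma wedge_one_left: "b \<in> carrier G \<Longrightarrow> wedge G \<one> b = \<one>\<^bsub>Ext\<^esub>"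
  using wedge_rel_one_left by (simp add: wedge_eq_wclass wclass_eq_one_iff)

lemma wedge_one_right: "b \<in> carrier G \<Longrightarrow> wedge G b \<one> = \<one>\<^bsub>Ext\<^esub>"
  using wedge_rel_one_right by (simp add: wedge_eq_wclass wclass_eq_one_iff)

lemma wedge_self: "b \<in> carrier G \<Longrightarrow> wedge G b b = \<one>\<^bsub>Ext\<^esub>"
  using wedge_rel_diag by (simp add: wedge_eq_wclass wclass_eq_one_iff)

lemma wedge_commute: "a \<in> carrier G \<Longrightarrow> b \<in> carrier G \<Longrightarrow> wedge G a b = wedge G b a"
  using wedge_rel_swap by (simp add: wedge_eq_wclass wclass_eq_iff)

lemma wedge_square: "a \<in> carrier G \<Longrightarrow> b \<in> carrier G \<Longrightarrow> wedge G a b \<otimes>\<^bsub>Ext\<^esub> wedge G a b = \<one>\<^bsub>Ext\<^esub>"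
  by (metis wedge_mult_right square_eq_one wedge_one_right)

abbreviation "Big \<equiv> big_group G"

lemma carrier_big_group:
  "x \<in> carrier Big \<longleftrightarrow>
     (\<exists>c g v. x = (wclass c, g, v) \<and> c \<in> carrier WF \<and> g \<in> carrier G \<and> (v = 1 \<or> v = -1))"
  by (auto simp: big_group_def carrier_ext_square)

lemma in_big_group [simp]:
  "c \<in> carrier WF \<Longrightarrow> g \<in> carrier G \<Longrightarrow> v = 1 \<or> v = -1 \<Longrightarrow> (wclass c, g, v) \<in> carrier Big"
  using carrier_big_group by blast

lemma big_group_mult:
  "c \<in> carrier WF \<Longrightarrow> c' \<in> carrier WF \<Longrightarrow> g \<in> carrier G \<Longrightarrow> g' \<in> carrier G \<Longrightarrow>
   (wclass c, g, v) \<otimes>\<^bsub>Big\<^esub> (wclass c', g', v') = (wclass (c + c' + frag_of (g, g')), g \<otimes> g', v * v')"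
  by (simp add: big_group_def big_mult_def wedge_eq_wclass wclass_add)

lemma big_group_one: "\<one>\<^bsub>Big\<^esub> = (wclass 0, \<one>, 1)"
  by (simp add: big_group_def wclass_zero)

lemma wedge_cocycle:
  assumes "c \<in> carrier WF" "c' \<in> carrier WF" "c'' \<in> carrier WF"
    and "g \<in> carrier G" "g' \<in> carrier G" "g'' \<in> carrier G"
  shows "wclass (c + c' + frag_of (g, g') + c'' + frag_of (g \<otimes> g', g''))
       = wclass (c + (c' + c'' + frag_of (g', g'')) + frag_of (g, g' \<otimes> g''))"
proof -
  have "(frag_of (g \<otimes> g', g'') - frag_of (g, g'') - frag_of (g', g''))
      - (frag_of (g, g' \<otimes> g'') - frag_of (g, g') - frag_of (g, g'')) \<in> WN"
    by (intro wedge_rels_diff wedge_rel_left wedge_rel_right) (use assms in auto)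
  moreover have "(frag_of (g \<otimes> g', g'') - frag_of (g, g'') - frag_of (g', g''))
      - (frag_of (g, g' \<otimes> g'') - frag_of (g, g') - frag_of (g, g''))
    = (c + c' + frag_of (g, g') + c'' + frag_of (g \<otimes> g', g''))
      - (c + (c' + c'' + frag_of (g', g'')) + frag_of (g, g' \<otimes> g''))"
    by (simp add: algebra_simps)
  ultimately show ?thesis
    using assms by (subst wclass_eq_iff) auto
qed

lemma group_big_group: "group Big"
proof (rule groupI)
  fix x y assume "x \<in> carrier Big" "y \<in> carrier Big"
  then obtain c g v c' g' v' where
    "x = (wclass c, g, v)" "c \<in> carrier WF" "g \<in> carrier G" "v = 1 \<or> v = -1" and
    "y = (wclass c', g', v')" "c' \<in> carrier WF" "g' \<in> carrier G" "v' = 1 \<or> v' = -1"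
    by (auto simp: carrier_big_group)
  then show "x \<otimes>\<^bsub>Big\<^esub> y \<in> carrier Big"
    by (auto simp: big_group_mult)
next
  show "\<one>\<^bsub>Big\<^esub> \<in> carrier Big" by (simp add: big_group_one)
next
  fix x y z assume "x \<in> carrier Big" "y \<in> carrier Big" "z \<in> carrier Big"
  then obtain c g v c' g' v' c'' g'' v'' where
    x: "x = (wclass c, g, v)" "c \<in> carrier WF" "g \<in> carrier G" and
    y: "y = (wclass c', g', v')" "c' \<in> carrier WF" "g' \<in> carrier G" and
    z: "z = (wclass c'', g'', v'')" "c'' \<in> carrier WF" "g'' \<in> carrier G"
    by (auto simp: carrier_big_group)
  then show "x \<otimes>\<^bsub>Big\<^esub> y \<otimes>\<^bsub>Big\<^esub> z = x \<otimes>\<^bsub>Big\<^esub> (y \<otimes>\<^bsub>Big\<^esub> z)"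
    using wedge_cocycle[of c c' c'' g g' g'']
    by (simp add: big_group_mult m_assoc mult.assoc)
next
  fix x assume "x \<in> carrier Big"
  then obtain c g v where x: "x = (wclass c, g, v)" "c \<in> carrier WF" "g \<in> carrier G" "v = 1 \<or> v = -1"
    by (auto simp: carrier_big_group)
  have "wclass (0 + c + frag_of (\<one>, g)) = wclass c"
    using x wedge_rel_one_left[of g] by (subst wclass_eq_iff) auto
  thus "\<one>\<^bsub>Big\<^esub> \<otimes>\<^bsub>Big\<^esub> x = x" using x by (simp add: big_group_one big_group_mult)
  have "wclass (- c + c + frag_of (g, g)) = wclass 0"
    using x wedge_rel_diag[of g] by (subst wclass_eq_iff) auto
  hence "(wclass (- c), g, v) \<otimes>\<^bsub>Big\<^esub> x = \<one>\<^bsub>Big\<^esub>"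
    using x by (auto simp: big_group_one big_group_mult)
  moreover have "(wclass (- c), g, v) \<in> carrier Big" using x by simp
  ultimately show "\<exists>y\<in>carrier Big. y \<otimes>\<^bsub>Big\<^esub> x = \<one>\<^bsub>Big\<^esub>" by blast
qed

sublocale Big: group Big by (rule group_big_group)

end

section \<open>Words modulo squares and commutators\<close>

lemma pres_eq_append_cong: "pres_eq R u v \<Longrightarrow> pres_eq R (p @ u @ q) (p @ v @ q)"
proof (induction rule: pres_eq.induct)
  case (refl w)
  show ?case by (rule pres_eq.refl)
next
  case (sym w w')
  show ?case by (rule pres_eq.sym[OF sym.IH])
next
  case (trans u v w)
  show ?case by (rule pres_eq.trans[OF trans.IH])
next
  case (cancel u x b v)
  show ?case using pres_eq.cancel[of R "p @ u" x b "v @ q"] by simp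
next
  case (relator r u v)
  show ?case using pres_eq.relator[OF relator, of "p @ u" "v @ q"] by simp
qed

lemma pres_eq_append:
  assumes "pres_eq R u v" "pres_eq R u' v'"
  shows "pres_eq R (u @ u') (v @ v')"
proof -
  have "pres_eq R (u @ u') (v @ u')"
    using pres_eq_append_cong[OF assms(1), of "[]" u'] by simp
  moreover have "pres_eq R (v @ u') (v @ v')"
    using pres_eq_append_cong[OF assms(2), of v "[]"] by simp
  ultimately show ?thesis by (rule pres_eq.trans)
qed

lemma word_class_eq: "pres_eq R u v \<Longrightarrow> word_class A R u = word_class A R v"
  unfolding word_class_def by (auto intro: pres_eq.trans pres_eq.sym)

definition letters :: "'a list \<Rightarrow> ('a \<times> bool) list" where
  "letters xs = map (\<lambda>x. (x, False)) xs"

lemma letters_simps [simp]: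
  "letters [] = []" "letters (x # xs) = (x, False) # letters xs" "letters (xs @ ys) = letters xs @ letters ys"
  "map fst (letters xs) = xs"
  by (simp_all add: letters_def comp_def)

definition odd_letters :: "('a \<times> bool) list \<Rightarrow> 'a set" where
  "odd_letters w = {x. odd (count_list (map fst w) x)}"

lemma odd_letters_subset: "odd_letters w \<subseteq> fst ` set w"
  unfolding odd_letters_def by (metis (mono_tags) count_notin even_zero mem_Collect_eq set_map subsetI)

lemma finite_odd_letters [simp]: "finite (odd_letters w)"
  by (rule finite_subset[OF odd_letters_subset]) simp

lemma odd_letters_Cons:
  "odd_letters (p # w) =
     (if fst p \<in> odd_letters w then odd_letters w - {fst p} else insert (fst p) (odd_letters w))"
  by (auto simp: odd_letters_def)

lemma odd_letters_append:
  "odd_letters (u @ v) = (odd_letters u - odd_letters v) \<union> (odd_letters v - odd_letters u)"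
  by (auto simp: odd_letters_def)

lemma odd_letters_invariant:
  assumes "\<And>r x. r \<in> R \<Longrightarrow> even (count_list (map fst r) x)"
  shows "pres_eq R w w' \<Longrightarrow> odd_letters w = odd_letters w'"
  unfolding odd_letters_def
  by (induction rule: pres_eq.induct) (use assms in auto)

lemma minus_one_power_length: "(-1::int) ^ length w = (-1) ^ card (odd_letters w)"
proof (induction w)
  case (Cons p w)
  show ?case
  proof (cases "fst p \<in> odd_letters w")
    case True
    then have card: "card (odd_letters w) = Suc (card (odd_letters w - {fst p}))"
      by (metis card.remove finite_odd_letters)
    have "(-1::int) ^ length (p # w) = - ((-1) ^ card (odd_letters w))"
      using Cons by simp
    also have "\<dots> = (-1) ^ card (odd_letters w - {fst p})"
      unfolding card by simp
    finally show ?thesis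
      using True by (simp add: odd_letters_Cons)
  qed (use Cons in \<open>simp add: odd_letters_Cons\<close>)
qed (simp add: odd_letters_def)

lemma odd_letters_letters_distinct: "distinct xs \<Longrightarrow> odd_letters (letters xs) = set xs"
proof -
  assume "distinct xs"
  then have "count_list xs x = (if x \<in> set xs then 1 else 0)" for x
    by (induction xs) auto
  then show ?thesis by (auto simp: odd_letters_def)
qed

definition letters_word :: "'a set \<Rightarrow> ('a \<times> bool) list" where
  "letters_word P = letters (SOME xs. set xs = P \<and> distinct xs)"

lemma
  assumes "finite P"
  shows set_letters_word: "fst ` set (letters_word P) = P"
    and odd_letters_letters_word: "odd_letters (letters_word P) = P"
proof -
  obtain xs where "set xs = P \<and> distinct xs" using finite_distinct_list[OF assms] by blast
  then have xs: "set (SOME xs. set xs = P \<and> distinct xs) = P \<and> distinct (SOME xs. set xs = P \<and> distinct xs)"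
    by (rule someI)
  then show "odd_letters (letters_word P) = P"
    unfolding letters_word_def by (simp add: odd_letters_letters_distinct)
  show "fst ` set (letters_word P) = P"
    using xs unfolding letters_word_def by (simp add: letters_def image_image)
qed

locale ea2_generators = ea2_group G for G :: "('g, 'b) monoid_scheme" (structure) +
  fixes T :: "'g set"
  assumes generators_subset: "T \<subseteq> carrier G"
begin

lemma generators_in_carrier [simp]: "t \<in> T \<Longrightarrow> t \<in> carrier G"
  using generators_subset by blast

abbreviation "R \<equiv> U_relators G T"

lemma U_relators_eq:
  "R = {[(t, False), (t, False)] | t. t \<in> T}
     \<union> {[(t, False), (s, False), (t, True), (s, True)] | t s. t \<in> T \<and> s \<in> T}"
  unfolding U_relators_def by auto

lemma odd_letters_pres_eq: "pres_eq R w w' \<Longrightarrow> odd_letters w = odd_letters w'"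
  by (rule odd_letters_invariant) (auto simp: U_relators_eq)

lemmas pres_eq_trans [trans] = pres_eq.trans[of R]

lemma pres_eq_square: "t \<in> T \<Longrightarrow> pres_eq R [(t, False), (t, False)] []"
  using pres_eq.relator[of "[(t, False), (t, False)]" R "[]" "[]"] by (simp add: U_relators_eq)

lemma pres_eq_inverse: assumes "t \<in> T" shows "pres_eq R [(t, True)] [(t, False)]"
proof -
  have "pres_eq R ([(t, True)] @ [(t, False), (t, False)] @ []) ([(t, True)] @ [])"
    by (rule pres_eq.relator) (simp add: U_relators_eq assms)
  from pres_eq.sym[OF this]
  have "pres_eq R [(t, True)] ([] @ [(t, True), (t, \<not> True)] @ [(t, False)])"
    by simp
  also have "pres_eq R \<dots> ([] @ [(t, False)])"
    by (rule pres_eq.cancel)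
  finally show ?thesis by simp
qed

lemma pres_eq_commute:
  assumes "s \<in> T" "t \<in> T"
  shows "pres_eq R [(s, False), (t, False)] [(t, False), (s, False)]"
proof -
  let ?st = "[(s, False), (t, False)]"
  have "pres_eq R ?st (?st @ [(s, True), (s, False)])"
    using pres_eq.sym[OF pres_eq.cancel[of R ?st s True "[]"]] by simp
  also have "pres_eq R \<dots> (?st @ [(s, True)] @ [(t, True), (t, False)] @ [(s, False)])"
    using pres_eq.sym[OF pres_eq.cancel[of R "?st @ [(s, True)]" t True "[(s, False)]"]] by simp
  also have "pres_eq R \<dots> ([] @ [(t, False), (s, False)])"
    using pres_eq.relator[of "[(s, False), (t, False), (s, True), (t, True)]" R "[]" "[(t, False), (s, False)]"]
      assms by (simp add: U_relators_eq)
  finally show ?thesis by simp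
qed

definition T_word :: "('g \<times> bool) list \<Rightarrow> bool" where
  "T_word w \<longleftrightarrow> fst ` set w \<subseteq> T"

lemma T_word_iff: "T_word w \<longleftrightarrow> set w \<subseteq> T \<times> UNIV"
  unfolding T_word_def by force

lemma T_word_simps [simp]:
  "T_word []" "T_word (p # w) \<longleftrightarrow> fst p \<in> T \<and> T_word w" "T_word (u @ v) \<longleftrightarrow> T_word u \<and> T_word v"
  "T_word (letters xs) \<longleftrightarrow> set xs \<subseteq> T"
  by (auto simp: T_word_def letters_def image_image)

lemma pres_eq_letters: "T_word w \<Longrightarrow> pres_eq R w (letters (map fst w))"
proof (induction w)
  case (Cons p w)
  obtain x b where p: "p = (x, b)" by force
  have "pres_eq R [(x, b)] [(x, False)]"
    using pres_eq_inverse[of x] Cons.prems p by (cases b) (auto intro: pres_eq.refl)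
  then show ?case
    using pres_eq_append[of R "[(x, b)]" "[(x, False)]" w] Cons p by simp
qed (simp add: pres_eq.refl)

lemma pres_eq_letters_rotate:
  "x \<in> T \<Longrightarrow> set xs \<subseteq> T \<Longrightarrow> pres_eq R (letters (x # xs)) (letters (xs @ [x]))"
proof (induction xs)
  case (Cons y xs)
  have IH: "pres_eq R (letters (x # xs)) (letters (xs @ [x]))"
    using Cons by simp
  have "pres_eq R (letters (x # y # xs)) (letters (y # x # xs))"
    using pres_eq_append_cong[OF pres_eq_commute[of x y], of "[]" "letters xs"] Cons.prems by simp
  also have "pres_eq R \<dots> (letters (y # xs @ [x]))"
    using pres_eq_append_cong[OF IH, of "[(y, False)]" "[]"] by simp
  finally show ?case by simp
qed (simp add: pres_eq.refl)

lemma pres_eq_Nil_if_even: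
  "set xs \<subseteq> T \<Longrightarrow> \<forall>x. even (count_list xs x) \<Longrightarrow> pres_eq R (letters xs) []"
proof (induction "length xs" arbitrary: xs rule: less_induct)
  case less
  show ?case
  proof (cases xs)
    case Nil then show ?thesis by (simp add: pres_eq.refl)
  next
    case (Cons x rest)
    have "odd (count_list rest x)"
      using less.prems(2)[rule_format, of x] Cons by simp
    then have "x \<in> set rest" by (metis count_notin even_zero)
    then obtain u v where rest: "rest = u @ x # v" by (meson split_list)
    have x: "x \<in> T" and u: "set u \<subseteq> T"
      using less.prems(1) Cons rest by auto
    have "pres_eq R (letters xs) (letters (u @ x # x # v))"
      using pres_eq_append_cong[OF pres_eq_letters_rotate[OF x u], of "[]" "letters (x # v)"] Cons rest
      by simp
    also have "pres_eq R \<dots> (letters (u @ v))"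
      using pres_eq_append_cong[OF pres_eq_square[OF x], of "letters u" "letters v"] by simp
    also have "pres_eq R \<dots> []"
    proof (rule less.hyps)
      show "length (u @ v) < length xs" "set (u @ v) \<subseteq> T"
        using less.prems(1) Cons rest by auto
      show "\<forall>y. even (count_list (u @ v) y)"
      proof
        fix y
        have "count_list xs y = count_list (u @ v) y + (if x = y then 2 else 0)"
          using Cons rest by simp
        then show "even (count_list (u @ v) y)"
          using less.prems(2)[rule_format, of y] by (cases "x = y") simp_all
      qed
    qed
    finally show ?thesis .
  qed
qed

lemma pres_eq_if_odd_letters_eq:
  assumes "T_word w" "T_word w'" "odd_letters w = odd_letters w'"
  shows "pres_eq R w w'"
proof -
  let ?xs = "map fst w" and ?ys = "map fst w'"
  have even: "\<forall>x. even (count_list zs x)" if "zs = ?xs @ ?ys \<or> zs = ?ys @ ?ys" for zs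
    using that assms(3) unfolding odd_letters_def by auto
  have sets: "set ?xs \<subseteq> T" "set ?ys \<subseteq> T"
    using assms(1,2) by (auto simp: T_word_def)
  have "pres_eq R w (letters ?xs @ [])"
    using pres_eq_letters[OF assms(1)] by simp
  also have "pres_eq R \<dots> (letters ?xs @ letters (?ys @ ?ys))"
    using sets even[of "?ys @ ?ys"]
    by (intro pres_eq_append pres_eq.refl pres_eq.sym[OF pres_eq_Nil_if_even]) auto
  also have "pres_eq R \<dots> (letters (?xs @ ?ys) @ letters ?ys)"
    by (simp add: pres_eq.refl)
  also have "pres_eq R \<dots> ([] @ letters ?ys)"
    using sets even[of "?xs @ ?ys"] by (intro pres_eq_append pres_eq.refl pres_eq_Nil_if_even) auto
  also have "pres_eq R \<dots> w'"
    using pres_eq.sym[OF pres_eq_letters[OF assms(2)]] by simp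
  finally show ?thesis .
qed

section \<open>The map \<open>\<phi>\<close> on words\<close>

lemma W_gen_eq: "W_gen G t = (wclass 0, t, -1)"
  by (simp add: W_gen_def wclass_zero)

lemma W_gen_in_big_group [simp]: "t \<in> carrier G \<Longrightarrow> W_gen G t \<in> carrier Big"
  by (simp add: W_gen_eq)

lemma W_gen_square: "t \<in> carrier G \<Longrightarrow> W_gen G t \<otimes>\<^bsub>Big\<^esub> W_gen G t = \<one>\<^bsub>Big\<^esub>"
  using wedge_rel_diag[of t] by (simp add: W_gen_eq big_group_mult big_group_one wclass_eq_iff)

lemma W_gen_commute:
  "t \<in> carrier G \<Longrightarrow> s \<in> carrier G \<Longrightarrow> W_gen G t \<otimes>\<^bsub>Big\<^esub> W_gen G s = W_gen G s \<otimes>\<^bsub>Big\<^esub> W_gen G t"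
  using wedge_rel_swap[of t s] by (simp add: W_gen_eq big_group_mult wclass_eq_iff m_comm)

lemma carrier_W_group: "carrier (W_group G T) = generate Big (W_gen G ` T)"
  by (simp add: W_group_def carrier_subgroup_generated Int_absorb1 image_subset_iff)

lemma W_group_mult [simp]: "x \<otimes>\<^bsub>W_group G T\<^esub> y = x \<otimes>\<^bsub>Big\<^esub> y"
  by (simp add: W_group_def)

lemma W_group_one [simp]: "\<one>\<^bsub>W_group G T\<^esub> = \<one>\<^bsub>Big\<^esub>"
  by (simp add: W_group_def)

lemma inv_W_gen_big_group: "t \<in> carrier G \<Longrightarrow> inv\<^bsub>Big\<^esub> (W_gen G t) = W_gen G t"
  using W_gen_square[of t] by (intro Big.inv_equality) auto

lemma inv_W_gen: assumes "t \<in> T" shows "inv\<^bsub>W_group G T\<^esub> (W_gen G t) = W_gen G t"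
proof -
  have "W_gen G t \<in> carrier (W_group G T)"
    using assms unfolding carrier_W_group by (intro generate.incl) simp
  then have "inv\<^bsub>W_group G T\<^esub> (W_gen G t) = inv\<^bsub>Big\<^esub> (W_gen G t)"
    unfolding W_group_def by (rule Big.inv_subgroup_generated)
  then show ?thesis
    using assms by (simp add: inv_W_gen_big_group)
qed

definition gen_image :: "'g \<Rightarrow> ('g \<times> 'g \<Rightarrow>\<^sub>0 int) set \<times> 'g \<times> int" where
  "gen_image x = (if x \<in> T then W_gen G x else \<one>\<^bsub>Big\<^esub>)"

text \<open>Inverse marks are ignored since every generator of \<open>\<W>\<close> is an involution. Letters outside
  \<open>T\<close> are sent to \<open>1\<close> only to make \<open>word_image\<close> land in the big group for every word.\<close>
definition word_image :: "('g \<times> bool) list \<Rightarrow> ('g \<times> 'g \<Rightarrow>\<^sub>0 int) set \<times> 'g \<times> int" where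
  "word_image w = foldr (\<lambda>p acc. gen_image (fst p) \<otimes>\<^bsub>Big\<^esub> acc) w \<one>\<^bsub>Big\<^esub>"

lemma gen_image_in_big_group [simp]: "gen_image x \<in> carrier Big"
  by (simp add: gen_image_def)

lemma gen_image_square: "gen_image x \<otimes>\<^bsub>Big\<^esub> gen_image x = \<one>\<^bsub>Big\<^esub>"
  using W_gen_square[of x] by (simp add: gen_image_def)

lemma gen_image_commute: "gen_image x \<otimes>\<^bsub>Big\<^esub> gen_image y = gen_image y \<otimes>\<^bsub>Big\<^esub> gen_image x"
  using W_gen_commute[of x y] by (simp add: gen_image_def)

lemma word_image_simps [simp]:
  "word_image [] = \<one>\<^bsub>Big\<^esub>"
  "word_image (p # w) = gen_image (fst p) \<otimes>\<^bsub>Big\<^esub> word_image w"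
  by (simp_all add: word_image_def)

lemma word_image_in_big_group [simp]: "word_image w \<in> carrier Big"
  by (induction w) simp_all

lemma word_image_append: "word_image (u @ v) = word_image u \<otimes>\<^bsub>Big\<^esub> word_image v"
  by (induction u) (simp_all add: Big.m_assoc)

lemma word_image_relator: "r \<in> R \<Longrightarrow> word_image r = \<one>\<^bsub>Big\<^esub>"
proof -
  assume "r \<in> R"
  then consider t where "r = [(t, False), (t, False)]"
    | t s where "r = [(t, False), (s, False), (t, True), (s, True)]"
    unfolding U_relators_eq by blast
  then show ?thesis
  proof cases
    case (2 t s)
    have "word_image r = gen_image t \<otimes>\<^bsub>Big\<^esub> (gen_image s \<otimes>\<^bsub>Big\<^esub> (gen_image t \<otimes>\<^bsub>Big\<^esub> gen_image s))"
      using 2 by simp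
    also have "\<dots> = gen_image t \<otimes>\<^bsub>Big\<^esub> (gen_image t \<otimes>\<^bsub>Big\<^esub> (gen_image s \<otimes>\<^bsub>Big\<^esub> gen_image s))"
      by (simp flip: Big.m_assoc add: gen_image_commute[of s t])
    finally show ?thesis by (simp add: gen_image_square)
  qed (simp add: gen_image_square)
qed

lemma word_image_pres_eq: "pres_eq R w w' \<Longrightarrow> word_image w = word_image w'"
proof (induction rule: pres_eq.induct)
  case (cancel u x b v)
  have "word_image ([(x, b), (x, \<not> b)] @ v) = word_image v"
    by (simp add: gen_image_square flip: Big.m_assoc)
  then show ?case by (metis word_image_append)
next
  case (relator r u v)
  show ?case using word_image_relator[OF relator] by (simp add: word_image_append)
qed auto

lemma eval_word_eq_word_image: "T_word w \<Longrightarrow> eval_word (W_group G T) (W_gen G) w = word_image w"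
proof (induction w)
  case (Cons p w)
  then show ?case
    by (cases p) (simp add: eval_word_def inv_W_gen gen_image_def)
qed (simp add: eval_word_def)

lemma word_class_in_U_group: "T_word w \<Longrightarrow> word_class T R w \<in> carrier (U_group G T)"
  by (auto simp: U_group_def presented_group_def T_word_iff)

lemma U_group_elem: "x \<in> carrier (U_group G T) \<Longrightarrow> \<exists>w. x = word_class T R w \<and> T_word w"
  by (auto simp: U_group_def presented_group_def T_word_iff)

lemma some_in_word_class:
  assumes "T_word w"
  shows "T_word (SOME w'. w' \<in> word_class T R w)" "pres_eq R w (SOME w'. w' \<in> word_class T R w)"
proof -
  have "w \<in> word_class T R w" using assms by (simp add: word_class_def T_word_iff pres_eq.refl)
  then have "(SOME w'. w' \<in> word_class T R w) \<in> word_class T R w" by (rule someI)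
  then show "T_word (SOME w'. w' \<in> word_class T R w)" "pres_eq R w (SOME w'. w' \<in> word_class T R w)"
    by (simp_all add: word_class_def T_word_iff)
qed

lemma phi_map_word_class: "T_word w \<Longrightarrow> phi_map G T (word_class T R w) = word_image w"
  using some_in_word_class[of w] eval_word_eq_word_image word_image_pres_eq
  by (simp add: phi_map_def induced_hom_def)

definition word_prod :: "('g \<times> bool) list \<Rightarrow> 'g" where
  "word_prod w = foldr (\<lambda>p acc. fst p \<otimes> acc) w \<one>"

primrec word_wedge :: "('g \<times> bool) list \<Rightarrow> ('g \<times> 'g \<Rightarrow>\<^sub>0 int)" where
  "word_wedge [] = 0"
| "word_wedge (p # w) = word_wedge w + frag_of (fst p, word_prod w)"

lemma word_prod_simps [simp]: "word_prod [] = \<one>" "word_prod (p # w) = fst p \<otimes> word_prod w"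
  by (simp_all add: word_prod_def)

lemma word_prod_in_carrier [simp]: "T_word w \<Longrightarrow> word_prod w \<in> carrier G"
  by (induction w) auto

lemma word_wedge_in_wedge_free [simp]: "T_word w \<Longrightarrow> word_wedge w \<in> carrier WF"
  by (induction w) auto

lemma word_image_eq: "T_word w \<Longrightarrow> word_image w = (wclass (word_wedge w), word_prod w, (-1) ^ length w)"
proof (induction w)
  case (Cons p w)
  then have "word_image (p # w) = (wclass 0, fst p, -1) \<otimes>\<^bsub>Big\<^esub> (wclass (word_wedge w), word_prod w, (-1) ^ length w)"
    by (simp add: gen_image_def W_gen_eq)
  also have "\<dots> = (wclass (word_wedge (p # w)), word_prod (p # w), (-1) ^ length (p # w))"
    using Cons.prems by (simp add: big_group_mult)
  finally show ?case .
qed (simp add: big_group_one)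

lemma word_prod_eq_finprod: "T_word w \<Longrightarrow> word_prod w = finprod G (\<lambda>x. x) (odd_letters w)"
proof (induction w)
  case (Cons p w)
  let ?x = "fst p" and ?P = "odd_letters w"
  have x: "?x \<in> carrier G" and P: "?P \<subseteq> carrier G"
    using Cons.prems odd_letters_subset[of w] by (fastforce simp: T_word_def)+
  then have Pi: "(\<lambda>x. x) \<in> ?P \<rightarrow> carrier G" "(\<lambda>x. x) \<in> ?P - {?x} \<rightarrow> carrier G"
    by auto
  show ?case
  proof (cases "?x \<in> ?P")
    case True
    then have "finprod G (\<lambda>x. x) ?P = finprod G (\<lambda>x. x) (insert ?x (?P - {?x}))"
      by (simp add: insert_absorb)
    also have "\<dots> = ?x \<otimes> finprod G (\<lambda>x. x) (?P - {?x})"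
      using x Pi by (intro finprod_insert) auto
    finally have "?x \<otimes> finprod G (\<lambda>x. x) ?P = finprod G (\<lambda>x. x) (?P - {?x})"
      using x Pi by simp
    then show ?thesis
      using Cons True by (simp add: odd_letters_Cons)
  next
    case False
    have "finprod G (\<lambda>x. x) (insert ?x ?P) = ?x \<otimes> finprod G (\<lambda>x. x) ?P"
      using x Pi False by (intro finprod_insert) auto
    then show ?thesis
      using Cons False by (simp add: odd_letters_Cons)
  qed
qed (simp add: odd_letters_def)

lemma phi_map_hom: "phi_map G T \<in> hom (U_group G T) (W_group G T)"
proof (rule homI)
  fix x assume "x \<in> carrier (U_group G T)"
  then obtain w where w: "x = word_class T R w" "T_word w" by (blast dest: U_group_elem)
  have "word_image w \<in> carrier (W_group G T)"
    using w(2) unfolding carrier_W_group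
    by (induction w) (auto simp: gen_image_def intro: generate.one generate.incl generate.eng)
  then show "phi_map G T x \<in> carrier (W_group G T)"
    using w by (simp add: phi_map_word_class)
next
  fix x y assume "x \<in> carrier (U_group G T)" "y \<in> carrier (U_group G T)"
  then obtain u v where u: "x = word_class T R u" "T_word u" and v: "y = word_class T R v" "T_word v"
    by (blast dest: U_group_elem)
  let ?u = "SOME u'. u' \<in> x" and ?v = "SOME v'. v' \<in> y"
  have "x \<otimes>\<^bsub>U_group G T\<^esub> y = word_class T R (?u @ ?v)"
    by (simp add: U_group_def presented_group_def)
  then show "phi_map G T (x \<otimes>\<^bsub>U_group G T\<^esub> y) = phi_map G T x \<otimes>\<^bsub>W_group G T\<^esub> phi_map G T y"
    using some_in_word_class[OF u(2)] some_in_word_class[OF v(2)] u v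
    by (simp add: phi_map_word_class word_image_append word_image_pres_eq)
qed

lemma phi_map_surj: "phi_map G T ` carrier (U_group G T) = carrier (W_group G T)"
proof
  show "phi_map G T ` carrier (U_group G T) \<subseteq> carrier (W_group G T)"
    using phi_map_hom by (auto simp: hom_def)
next
  have "\<exists>w. T_word w \<and> z = word_image w" if "z \<in> generate Big (W_gen G ` T)" for z
    using that
  proof (induction rule: generate.induct)
    case one
    show ?case by (metis T_word_simps(1) word_image_simps(1))
  next
    case (incl h)
    then obtain t where "t \<in> T" "h = W_gen G t" by auto
    then show ?case by (intro exI[of _ "[(t, False)]"]) (simp add: gen_image_def)
  next
    case (inv h)
    then obtain t where "t \<in> T" "h = W_gen G t" by auto
    then show ?case by (intro exI[of _ "[(t, False)]"]) (simp add: gen_image_def inv_W_gen_big_group)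
  next
    case (eng h1 h2)
    then show ?case by (metis T_word_simps(3) word_image_append)
  qed
  then show "carrier (W_group G T) \<subseteq> phi_map G T ` carrier (U_group G T)"
    unfolding carrier_W_group by (metis image_eqI phi_map_word_class subsetI word_class_in_U_group)
qed

lemma phi_map_iso_iff_inj:
  "phi_map G T \<in> iso (U_group G T) (W_group G T) \<longleftrightarrow> inj_on (phi_map G T) (carrier (U_group G T))"
  using phi_map_hom phi_map_surj by (auto simp: iso_def bij_betw_def)

lemma word_image_square: "T_word w \<Longrightarrow> word_image w \<otimes>\<^bsub>Big\<^esub> word_image w = \<one>\<^bsub>Big\<^esub>"
  using word_image_pres_eq[OF pres_eq_if_odd_letters_eq[of "w @ w" "[]"]]
  by (simp add: word_image_append odd_letters_append odd_letters_def)

text \<open>Since every element of \<open>\<W>\<close> is an involution, \<open>\<phi> u = \<phi> v\<close> puts \<open>u @ v\<close> in the kernel.\<close>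
lemma inj_phi_map_if_kernel_trivial:
  assumes "\<And>w. T_word w \<Longrightarrow> word_image w = \<one>\<^bsub>Big\<^esub> \<Longrightarrow> odd_letters w = {}"
  shows "inj_on (phi_map G T) (carrier (U_group G T))"
proof (rule inj_onI)
  fix x y assume "x \<in> carrier (U_group G T)" "y \<in> carrier (U_group G T)"
    and eq: "phi_map G T x = phi_map G T y"
  then obtain u v where u: "x = word_class T R u" "T_word u" and v: "y = word_class T R v" "T_word v"
    by (blast dest: U_group_elem)
  have "word_image (u @ v) = \<one>\<^bsub>Big\<^esub>"
    using eq u v word_image_square[OF v(2)] by (simp add: phi_map_word_class word_image_append)
  then have "odd_letters (u @ v) = {}"
    using assms u v by simp
  then have "odd_letters u = odd_letters v"
    by (auto simp: odd_letters_append)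
  then have "pres_eq R u v"
    using u v by (intro pres_eq_if_odd_letters_eq)
  then show "x = y"
    using u v by (simp add: word_class_eq)
qed

lemma word_image_eq_oneD:
  assumes "T_word w" "word_image w = \<one>\<^bsub>Big\<^esub>"
  shows "wclass (word_wedge w) = \<one>\<^bsub>Ext\<^esub>" "finprod G (\<lambda>x. x) (odd_letters w) = \<one>"
    "even (card (odd_letters w))"
proof -
  have "(wclass (word_wedge w), word_prod w, (-1::int) ^ length w) = (wclass 0, \<one>, 1)"
    using assms word_image_eq by (simp add: big_group_one)
  then show "wclass (word_wedge w) = \<one>\<^bsub>Ext\<^esub>" "finprod G (\<lambda>x. x) (odd_letters w) = \<one>"
    "even (card (odd_letters w))"
    using assms(1) word_prod_eq_finprod minus_one_power_length[of w]
    by (auto simp: wclass_zero minus_one_power_iff split: if_splits)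
qed

section \<open>Part (1): a basis gives an injective \<open>\<phi>\<close>\<close>

lemma inj_phi_map_if_basis:
  assumes basis: "f2_basis G (T - {\<one>})"
  shows "inj_on (phi_map G T) (carrier (U_group G T))"
proof (rule inj_phi_map_if_kernel_trivial)
  fix w assume w: "T_word w" "word_image w = \<one>\<^bsub>Big\<^esub>"
  let ?P = "odd_letters w"
  have P: "?P \<subseteq> T" "finite ?P"
    using odd_letters_subset[of w] w(1) by (auto simp: T_word_def)
  have "finprod G (\<lambda>x. x) (?P - {\<one>}) = finprod G (\<lambda>x. x) ?P"
    using P by (intro finprod_mono_neutral_cong_left) (auto simp: subset_iff)
  then have "finprod G (\<lambda>x. x) (?P - {\<one>}) = \<one>"
    using word_image_eq_oneD[OF w] by simp
  moreover have "?P - {\<one>} \<subseteq> T - {\<one>}" "finite (?P - {\<one>})"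
    using P by auto
  ultimately have "?P \<subseteq> {\<one>}"
    using basis unfolding f2_basis_def f2_independent_def by blast
  then have "?P = {} \<or> ?P = {\<one>}" by blast
  then show "?P = {}"
    using word_image_eq_oneD[OF w] by auto
qed

end

section \<open>Part (2): counting\<close>

lemma (in comm_group) finprod_symdiff_involutions:
  assumes "Y \<subseteq> carrier G" "finite Y" "\<And>x. x \<in> Y \<Longrightarrow> x \<otimes> x = \<one>" "S1 \<subseteq> Y" "S2 \<subseteq> Y"
  shows "finprod G (\<lambda>x. x) S1 \<otimes> finprod G (\<lambda>x. x) S2 = finprod G (\<lambda>x. x) ((S1 - S2) \<union> (S2 - S1))"
proof -
  let ?f = "finprod G (\<lambda>x. x)"
  have fin: "finite A" and Pi: "(\<lambda>x. x) \<in> A \<rightarrow> carrier G" if "A \<subseteq> Y" for A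
    using that assms(1,2) finite_subset by auto
  have split: "?f (A \<union> B) = ?f A \<otimes> ?f B" if "A \<subseteq> Y" "B \<subseteq> Y" "A \<inter> B = {}" for A B
    using that fin Pi by (intro finprod_Un_disjoint) auto
  have "?f (S1 \<inter> S2) \<otimes> ?f (S1 \<inter> S2) = finprod G (\<lambda>x. x \<otimes> x) (S1 \<inter> S2)"
    using assms Pi[of "S1 \<inter> S2"] by (intro finprod_multf[symmetric]) auto
  also have "\<dots> = \<one>"
    using assms by (intro finprod_one_eqI) auto
  finally have square: "?f (S1 \<inter> S2) \<otimes> ?f (S1 \<inter> S2) = \<one>" .
  have "S1 = (S1 - S2) \<union> (S1 \<inter> S2)" "S2 = (S2 - S1) \<union> (S1 \<inter> S2)" by auto
  then have "?f S1 = ?f (S1 - S2) \<otimes> ?f (S1 \<inter> S2)" "?f S2 = ?f (S2 - S1) \<otimes> ?f (S1 \<inter> S2)"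
    using assms(4,5) split[of "S1 - S2" "S1 \<inter> S2"] split[of "S2 - S1" "S1 \<inter> S2"] by auto
  moreover have "?f ((S1 - S2) \<union> (S2 - S1)) = ?f (S1 - S2) \<otimes> ?f (S2 - S1)"
    using assms(4,5) by (intro split) auto
  moreover have "?f (S1 - S2) \<in> carrier G" "?f (S2 - S1) \<in> carrier G" "?f (S1 \<inter> S2) \<in> carrier G"
    using assms Pi by (auto intro!: finprod_closed)
  moreover note square
  ultimately show ?thesis
    by (simp add: m_ac flip: m_assoc)
qed

lemma (in comm_group) generate_involutions_subset:
  assumes Y: "Y \<subseteq> carrier G" "finite Y" and inv: "\<And>x. x \<in> Y \<Longrightarrow> x \<otimes> x = \<one>"
  shows "generate G Y \<subseteq> (\<lambda>S. finprod G (\<lambda>x. x) S) ` Pow Y"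
proof
  fix h assume "h \<in> generate G Y"
  then show "h \<in> (\<lambda>S. finprod G (\<lambda>x. x) S) ` Pow Y"
  proof (induction rule: generate.induct)
    case one
    show ?case by (rule image_eqI[of _ _ "{}"]) auto
  next
    case (incl h)
    then show ?case using Y by (intro image_eqI[of _ _ "{h}"]) auto
  next
    case (inv h)
    then have "inv h = h" using Y by (intro inv_equality) (auto simp: assms(3))
    with inv show ?case using Y by (intro image_eqI[of _ _ "{h}"]) auto
  next
    case (eng h1 h2)
    then obtain S1 S2 where "S1 \<subseteq> Y" "S2 \<subseteq> Y" "h1 = finprod G (\<lambda>x. x) S1" "h2 = finprod G (\<lambda>x. x) S2"
      by auto
    then show ?case
      using finprod_symdiff_involutions[OF assms] by (intro image_eqI[of _ _ "(S1 - S2) \<union> (S2 - S1)"]) auto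
  qed
qed

lemma (in comm_group) card_generate_involutions:
  assumes "Y \<subseteq> carrier G" "finite Y" "\<And>x. x \<in> Y \<Longrightarrow> x \<otimes> x = \<one>"
  shows "finite (generate G Y)" "card (generate G Y) \<le> 2 ^ card Y"
proof -
  have fin: "finite ((\<lambda>S. finprod G (\<lambda>x. x) S) ` Pow Y)" using assms by simp
  then show "finite (generate G Y)"
    using generate_involutions_subset[OF assms] finite_subset by blast
  have "card (generate G Y) \<le> card ((\<lambda>S. finprod G (\<lambda>x. x) S) ` Pow Y)"
    by (rule card_mono[OF fin generate_involutions_subset[OF assms]])
  also have "\<dots> \<le> card (Pow Y)" by (rule card_image_le) (use assms in simp)
  finally show "card (generate G Y) \<le> 2 ^ card Y" using assms by (simp add: card_Pow)
qed

context ea2_group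
begin

lemma finite_generate: "B \<subseteq> carrier G \<Longrightarrow> finite B \<Longrightarrow> finite (generate G B)"
  by (rule card_generate_involutions(1)) auto

lemma card_generate_le: "B \<subseteq> carrier G \<Longrightarrow> finite B \<Longrightarrow> card (generate G B) \<le> 2 ^ card B"
  by (rule card_generate_involutions(2)) auto

definition basis_wedges :: "'g set \<Rightarrow> ('g \<times> 'g \<Rightarrow>\<^sub>0 int) set set" where
  "basis_wedges B = {wedge G x y | x y. x \<in> B \<and> y \<in> B \<and> x \<noteq> y}"

definition wedge_span :: "'g set \<Rightarrow> ('g \<times> 'g \<Rightarrow>\<^sub>0 int) set set" where
  "wedge_span B = generate Ext (basis_wedges B)"

lemma card_basis_wedges:
  assumes B: "finite B" "B \<subseteq> carrier G"
  shows "finite (basis_wedges B)" "card (basis_wedges B) \<le> card B choose 2"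
proof -
  define pick where "pick A = (SOME p. A = {fst p, snd p} \<and> fst p \<noteq> snd p)" for A :: "'g set"
  let ?f = "\<lambda>A. wedge G (fst (pick A)) (snd (pick A))"
  have sub: "basis_wedges B \<subseteq> ?f ` {A. A \<subseteq> B \<and> card A = 2}"
  proof
    fix z assume "z \<in> basis_wedges B"
    then obtain x y where z: "z = wedge G x y" "x \<in> B" "y \<in> B" "x \<noteq> y"
      unfolding basis_wedges_def by blast
    let ?p = "pick {x, y}"
    have "{x, y} = {fst ?p, snd ?p} \<and> fst ?p \<noteq> snd ?p"
      unfolding pick_def by (rule someI[of _ "(x, y)"]) (simp add: z)
    then have "(fst ?p, snd ?p) = (x, y) \<or> (fst ?p, snd ?p) = (y, x)"
      by (auto simp: doubleton_eq_iff prod_eq_iff)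
    moreover have "wedge G x y = wedge G y x"
      using z B by (intro wedge_commute) auto
    ultimately have "z = ?f {x, y}"
      using z(1) by (elim disjE) simp_all
    then show "z \<in> ?f ` {A. A \<subseteq> B \<and> card A = 2}"
      using z by auto
  qed
  have fin: "finite {A. A \<subseteq> B \<and> card A = 2}" using B by simp
  show "finite (basis_wedges B)" using finite_subset[OF sub] fin by blast
  have "card (basis_wedges B) \<le> card (?f ` {A. A \<subseteq> B \<and> card A = 2})"
    by (rule card_mono[OF _ sub]) (use fin in simp)
  also have "\<dots> \<le> card {A. A \<subseteq> B \<and> card A = 2}" by (rule card_image_le[OF fin])
  also have "\<dots> = card B choose 2" by (rule n_subsets[OF B(1)])
  finally show "card (basis_wedges B) \<le> card B choose 2" .
qed

lemma card_wedge_span: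
  assumes B: "finite B" "B \<subseteq> carrier G"
  shows "finite (wedge_span B)" "card (wedge_span B) \<le> 2 ^ (card B choose 2)"
proof -
  have gens: "basis_wedges B \<subseteq> carrier Ext"
    "\<And>z. z \<in> basis_wedges B \<Longrightarrow> z \<otimes>\<^bsub>Ext\<^esub> z = \<one>\<^bsub>Ext\<^esub>"
    using B(2) by (auto simp: basis_wedges_def subset_iff wedge_square)
  show "finite (wedge_span B)"
    unfolding wedge_span_def
    by (rule comm_group.card_generate_involutions(1)[OF comm_group_ext_square gens(1)
          card_basis_wedges(1)[OF B] gens(2)])
  have "card (wedge_span B) \<le> 2 ^ card (basis_wedges B)"
    unfolding wedge_span_def
    by (rule comm_group.card_generate_involutions(2)[OF comm_group_ext_square gens(1)
          card_basis_wedges(1)[OF B] gens(2)])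
  also have "\<dots> \<le> 2 ^ (card B choose 2)"
    by (rule power_increasing[OF card_basis_wedges(2)[OF B]]) simp
  finally show "card (wedge_span B) \<le> 2 ^ (card B choose 2)" .
qed

lemma wedge_in_wedge_span_basis:
  assumes B: "B \<subseteq> carrier G" and y: "y \<in> B" and x: "x \<in> generate G B"
  shows "wedge G x y \<in> wedge_span B"
proof -
  have yc: "y \<in> carrier G" using B y by blast
  have basis: "wedge G h y \<in> wedge_span B" if "h \<in> B" for h
    using that yc y by (cases "h = y")
      (auto simp: wedge_self wedge_span_def basis_wedges_def intro: generate.one generate.incl)
  from x show ?thesis
  proof (induction rule: generate.induct)
    case one
    then show ?case using yc by (simp add: wedge_one_left wedge_span_def generate.one)
  next
    case (incl h)
    then show ?case by (rule basis)
  next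
    case (inv h)
    then show ?case using basis B by auto
  next
    case (eng h1 h2)
    then show ?case
      using yc generate_in_carrier[OF B]
      by (auto simp: wedge_mult_left wedge_span_def intro: generate.eng)
  qed
qed

lemma wedge_in_wedge_span:
  assumes B: "B \<subseteq> carrier G" and x: "x \<in> generate G B" and y: "y \<in> generate G B"
  shows "wedge G x y \<in> wedge_span B"
  using y
proof (induction rule: generate.induct)
  case one
  then show ?case
    using generate_in_carrier[OF B x] by (auto simp: wedge_one_right wedge_span_def intro: generate.one)
next
  case (incl h)
  then show ?case using wedge_in_wedge_span_basis[OF B _ x] by blast
next
  case (inv h)
  then show ?case using wedge_in_wedge_span_basis[OF B _ x] B by auto
next
  case (eng h1 h2)
  then show ?case
    using generate_in_carrier[OF B] x
    by (auto simp: wedge_mult_right wedge_span_def intro: generate.eng)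
qed

end

context ea2_generators
begin

lemma word_image_in_span:
  assumes B: "B \<subseteq> carrier G" and w: "T_word w" "fst ` set w \<subseteq> generate G B"
  shows "word_image w \<in> wedge_span B \<times> generate G B \<times> {1, -1}"
proof -
  have "wclass (word_wedge w) \<in> wedge_span B \<and> word_prod w \<in> generate G B"
    using w
  proof (induction w)
    case Nil
    then show ?case by (simp add: wclass_zero wedge_span_def generate.one)
  next
    case (Cons p w)
    then have IH: "wclass (word_wedge w) \<in> wedge_span B" "word_prod w \<in> generate G B"
      and p: "fst p \<in> generate G B" "fst p \<in> carrier G"
      by auto
    have "wclass (word_wedge (p # w)) = wclass (word_wedge w) \<otimes>\<^bsub>Ext\<^esub> wedge G (fst p) (word_prod w)"
      using Cons.prems p by (simp add: wedge_eq_wclass wclass_add)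
    then show ?case
      using IH p wedge_in_wedge_span[OF B p(1) IH(2)]
      by (auto simp: wedge_span_def intro: generate.eng)
  qed
  then show ?thesis
    using w by (simp add: word_image_eq minus_one_power_iff)
qed

lemma letters_word_props:
  assumes "S \<subseteq> T" "finite S" "P \<subseteq> S"
  shows "T_word (letters_word P)" "odd_letters (letters_word P) = P" "fst ` set (letters_word P) = P"
  using assms finite_subset[OF assms(3,2)]
  by (auto simp: T_word_def set_letters_word odd_letters_letters_word)

lemma inj_on_word_image_letters_word:
  assumes inj: "inj_on (phi_map G T) (carrier (U_group G T))" and S: "S \<subseteq> T" "finite S"
  shows "inj_on (\<lambda>P. word_image (letters_word P)) (Pow S)"
proof (rule inj_onI)
  fix P Q assume PQ: "P \<in> Pow S" "Q \<in> Pow S"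
    and eq: "word_image (letters_word P) = word_image (letters_word Q)"
  note words = letters_word_props[OF S]
  have "phi_map G T (word_class T R (letters_word P)) = phi_map G T (word_class T R (letters_word Q))"
    using eq words PQ by (simp add: phi_map_word_class)
  then have "word_class T R (letters_word P) = word_class T R (letters_word Q)"
    by (rule inj_onD[OF inj]) (use words PQ in \<open>auto intro: word_class_in_U_group\<close>)
  then have "pres_eq R (letters_word P) (letters_word Q)"
    using words PQ by (auto simp: word_class_def T_word_iff intro: pres_eq.refl)
  then show "P = Q"
    using words PQ odd_letters_pres_eq by force
qed

lemma card_le_if_inj_phi_map:
  assumes inj: "inj_on (phi_map G T) (carrier (U_group G T))"
    and B: "finite B" "B \<subseteq> carrier G" and S: "S \<subseteq> T" "S \<subseteq> generate G B"
  shows "card S \<le> (card B choose 2) + card B + 1"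
proof -
  let ?img = "wedge_span B \<times> generate G B \<times> {1::int, -1}"
  have fin: "finite (wedge_span B)" "finite (generate G B)" "finite S"
    using card_wedge_span(1)[OF B] finite_generate[OF B(2,1)] S finite_subset by blast+
  note words = letters_word_props[OF S(1) fin(3)]
  have "(\<lambda>P. word_image (letters_word P)) ` Pow S \<subseteq> ?img"
  proof
    fix z assume "z \<in> (\<lambda>P. word_image (letters_word P)) ` Pow S"
    then obtain P where P: "P \<subseteq> S" "z = word_image (letters_word P)" by auto
    then show "z \<in> ?img"
      using word_image_in_span[OF B(2)] words[OF P(1)] S(2) by auto
  qed
  then have "card (Pow S) \<le> card ?img"
    using fin inj_on_word_image_letters_word[OF inj S(1) fin(3)] by (intro card_inj_on_le) auto
  also have "\<dots> \<le> 2 ^ (card B choose 2) * (2 ^ card B * 2)"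
    using fin card_wedge_span(2)[OF B] card_generate_le[OF B(2,1)]
    by (simp add: card_cartesian_product mult_le_mono)
  also have "\<dots> = 2 ^ ((card B choose 2) + card B + 1)"
    by (simp add: power_add)
  finally have "(2::nat) ^ card S \<le> 2 ^ ((card B choose 2) + card B + 1)"
    using fin by (simp only: card_Pow)
  then show ?thesis
    by (rule power_le_imp_le_exp[rotated]) simp
qed

lemma real_choose_two: "real (n choose 2) = real n * (real n - 1) / 2"
proof (cases n)
  case (Suc m)
  have "even (n * (n - 1))" using Suc by simp
  then have "2 * (n choose 2) = n * (n - 1)"
    by (simp add: choose_two)
  then have "2 * real (n choose 2) = real n * real (n - 1)"
    by (metis of_nat_mult of_nat_numeral)
  then show ?thesis using Suc by simp
qed simp

lemma not_inj_phi_map_if_large: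
  assumes one: "\<one> \<in> T" and dim: "f2_dim G n"
    and large: "real (card (T - {\<one>})) > real n * (real n + 1) / 2"
  shows "\<not> inj_on (phi_map G T) (carrier (U_group G T))"
proof
  assume inj: "inj_on (phi_map G T) (carrier (U_group G T))"
  obtain B where B: "finite B" "B \<subseteq> carrier G" "generate G B = carrier G" "card B = n"
    using dim by (auto simp: f2_dim_def f2_basis_def f2_independent_def)
  have "card T \<le> (n choose 2) + n + 1"
    using card_le_if_inj_phi_map[OF inj B(1,2) order_refl] generators_subset B(3,4) by simp
  moreover have "card (T - {\<one>}) = card T - 1"
    using one finite_generate[OF B(2,1)] B(3) generators_subset by (simp add: finite_subset)
  ultimately have "real (card (T - {\<one>})) \<le> real (n choose 2) + real n"
    by linarith
  also have "\<dots> = real n * (real n + 1) / 2"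
    by (simp add: real_choose_two field_simps)
  finally show False using large by simp
qed

end

section \<open>Part (3): the case \<open>T = G\<close>\<close>

context ea2_group
begin

lemma f2_dim_card:
  assumes "B \<subseteq> carrier G" "generate G B = carrier G" "finite B"
    and "\<And>S. S \<subseteq> B \<Longrightarrow> S \<noteq> {} \<Longrightarrow> finprod G (\<lambda>x. x) S \<noteq> \<one>"
  shows "f2_dim G (card B)"
  unfolding f2_dim_def f2_basis_def f2_independent_def
  using assms by blast

lemma card_generate_three_independent:
  assumes abc: "a \<in> carrier G" "b \<in> carrier G" "c \<in> carrier G"
    and a: "a \<noteq> \<one>" and b: "b \<notin> generate G {a}" and c: "c \<notin> generate G {a, b}"
  shows "8 \<le> card (generate G {a, b, c})"
proof -
  let ?H = "generate G {a, b}" and ?X = "{\<one>, a, b, a \<otimes> b}"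
  let ?Y = "(\<lambda>x. c \<otimes> x) ` ?X"
  have H: "?H \<subseteq> carrier G" using abc by (intro generate_incl) auto
  have X: "?X \<subseteq> ?H" by (auto intro: generate.one generate.incl generate.eng)
  have "b \<noteq> \<one>" "b \<noteq> a" using b by (auto intro: generate.one generate.incl)
  moreover have "a \<otimes> b \<noteq> \<one>" "a \<otimes> b \<noteq> a" "a \<otimes> b \<noteq> b"
    using abc a \<open>b \<noteq> \<one>\<close> \<open>b \<noteq> a\<close> mult_ne_one[of a b] by auto
  ultimately have card_X: "card ?X = 4" using a by auto
  have "inj_on (\<lambda>x. c \<otimes> x) ?X"
    using abc X H by (intro inj_onI) (metis l_cancel subsetD)
  then have card_Y: "card ?Y = 4"
    using card_X by (simp only: card_image)
  have "?X \<inter> ?Y = {}"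
  proof (rule ccontr)
    assume "?X \<inter> ?Y \<noteq> {}"
    then obtain x y where xy: "x \<in> ?X" "y \<in> ?X" "y = c \<otimes> x" by blast
    moreover have "x \<in> carrier G" using xy(1) X H by blast
    ultimately have "c = y \<otimes> x" using abc by (simp add: m_assoc)
    moreover have "y \<otimes> x \<in> ?H" using xy X by (auto intro: generate.eng)
    ultimately show False using c by simp
  qed
  then have "card (?X \<union> ?Y) = card ?X + card ?Y"
    by (intro card_Un_disjoint) auto
  then have "card (?X \<union> ?Y) = 8"
    using card_X card_Y by linarith
  moreover have "?X \<union> ?Y \<subseteq> generate G {a, b, c}"
    using X mono_generate[of "{a, b}" "{a, b, c}"]
    by (auto intro: generate.eng generate.incl)
  then have "card (?X \<union> ?Y) \<le> card (generate G {a, b, c})"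
    using abc by (intro card_mono finite_generate) auto
  ultimately show ?thesis by simp
qed

lemma f2_dim_le_2_or_three_independent:
  "(\<exists>n \<le> 2. f2_dim G n) \<or>
   (\<exists>a b c. a \<in> carrier G \<and> b \<in> carrier G \<and> c \<in> carrier G \<and>
      a \<noteq> \<one> \<and> b \<notin> generate G {a} \<and> c \<notin> generate G {a, b})"
proof (cases "generate G {} = carrier G")
  case True
  then show ?thesis using f2_dim_card[of "{}"] by force
next
  case False
  then obtain a where a: "a \<in> carrier G" "a \<notin> generate G {}"
    using generate_incl[of "{}"] by blast
  then have a1: "a \<noteq> \<one>" by (auto intro: generate.one)
  show ?thesis
  proof (cases "generate G {a} = carrier G")
    case True
    have "f2_dim G (card {a})"
      using True a a1 by (intro f2_dim_card) (auto simp: subset_singleton_iff)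
    then show ?thesis by auto
  next
    case False
    then obtain b where b: "b \<in> carrier G" "b \<notin> generate G {a}"
      using generate_incl[of "{a}"] a by blast
    then have b1: "b \<noteq> \<one>" "b \<noteq> a" by (auto intro: generate.one generate.incl)
    show ?thesis
    proof (cases "generate G {a, b} = carrier G")
      case True
      have "finprod G (\<lambda>x. x) S \<noteq> \<one>" if "S \<subseteq> {a, b}" "S \<noteq> {}" for S
      proof -
        have "S = {a} \<or> S = {b} \<or> S = {a, b}" using that by blast
        then show ?thesis using a b a1 b1 mult_ne_one[of a b] by auto
      qed
      then have "f2_dim G (card {a, b})"
        using True a b by (intro f2_dim_card) auto
      then show ?thesis using b1 by auto
    next
      case False
      then obtain c where "c \<in> carrier G" "c \<notin> generate G {a, b}"
        using generate_incl[of "{a, b}"] a b by blast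
      then show ?thesis using a a1 b by blast
    qed
  qed
qed

end

lemma (in ea2_generators) f2_dim_le_2_if_inj_phi_map:
  assumes TG: "T = carrier G" and inj: "inj_on (phi_map G T) (carrier (U_group G T))"
  shows "\<exists>n. f2_dim G n \<and> n \<le> 2"
proof -
  have False
    if abc: "a \<in> carrier G" "b \<in> carrier G" "c \<in> carrier G"
      and independent: "a \<noteq> \<one>" "b \<notin> generate G {a}" "c \<notin> generate G {a, b}" for a b c
  proof -
    have "a \<in> generate G {a}" "a \<in> generate G {a, b}" "b \<in> generate G {a, b}"
      by (auto intro: generate.incl)
    then have "a \<noteq> b" "a \<noteq> c" "b \<noteq> c"
      using independent by auto
    then have "card {a, b, c} = 3"
      by simp
    have "8 \<le> card (generate G {a, b, c})"
      using that by (rule card_generate_three_independent)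
    also have "\<dots> \<le> (card {a, b, c} choose 2) + card {a, b, c} + 1"
      using abc TG generate_incl[of "{a, b, c}"]
      by (intro card_le_if_inj_phi_map[OF inj]) auto
    finally show False
      using \<open>card {a, b, c} = 3\<close> by (simp add: choose_two)
  qed
  then show ?thesis
    using f2_dim_le_2_or_three_independent by blast
qed

context ea2_group
begin

lemma carrier_subset_finprod_basis:
  assumes "f2_basis G B" "finite B"
  shows "carrier G \<subseteq> (\<lambda>S. finprod G (\<lambda>x. x) S) ` Pow B"
proof -
  have B: "B \<subseteq> carrier G" "generate G B = carrier G"
    using assms(1) by (auto simp: f2_basis_def f2_independent_def)
  then have "\<And>x. x \<in> B \<Longrightarrow> x \<otimes> x = \<one>" by auto
  then show ?thesis
    using generate_involutions_subset[OF B(1) assms(2)] B(2) by simp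
qed

lemma f2_basis_carrier_if_dim_le_1:
  assumes "f2_dim G n" "n \<le> 1"
  shows "f2_basis G (carrier G - {\<one>})"
proof -
  obtain B where B: "f2_basis G B" "finite B" "card B = n"
    using assms(1) by (auto simp: f2_dim_def)
  have Bc: "B \<subseteq> carrier G"
    using B(1) by (simp add: f2_basis_def f2_independent_def)
  have ind: "finprod G (\<lambda>x. x) S \<noteq> \<one>" if "S \<subseteq> B" "S \<noteq> {}" for S
    using B(1) that finite_subset[OF that(1) B(2)] by (simp add: f2_basis_def f2_independent_def)
  have "\<one> \<notin> B" using ind[of "{\<one>}"] by auto
  moreover have "carrier G \<subseteq> insert \<one> B"
  proof
    fix z assume "z \<in> carrier G"
    then obtain S where S: "S \<subseteq> B" "z = finprod G (\<lambda>x. x) S"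
      using carrier_subset_finprod_basis[OF B(1,2)] by blast
    have "S = {} \<or> (\<exists>x. S = {x})"
      using card_mono[OF B(2) S(1)] B(3) assms(2) finite_subset[OF S(1) B(2)]
      by (metis card_0_eq card_1_singleton_iff le_Suc_eq le_zero_eq One_nat_def)
    then show "z \<in> insert \<one> B" using S Bc by auto
  qed
  ultimately have "carrier G - {\<one>} = B" using Bc by auto
  then show ?thesis using B(1) by simp
qed

end

locale ea2_klein = ea2_group G for G :: "('g, 'b) monoid_scheme" (structure) +
  fixes a b :: 'g
  assumes a_in_carrier: "a \<in> carrier G" and b_in_carrier: "b \<in> carrier G"
    and a_ne_one: "a \<noteq> \<one>" and b_ne_one: "b \<noteq> \<one>" and a_ne_b: "a \<noteq> b"
    and carrier_eq: "carrier G = {\<one>, a, b, a \<otimes> b}"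
begin

sublocale ea2_generators G "carrier G" by unfold_locales simp

lemma klein_distinct:
  "a \<noteq> \<one>" "b \<noteq> \<one>" "a \<noteq> b" "a \<otimes> b \<noteq> \<one>" "a \<otimes> b \<noteq> a" "a \<otimes> b \<noteq> b"
  using a_in_carrier b_in_carrier a_ne_one b_ne_one a_ne_b mult_ne_one[of a b] by auto

lemmas klein_distinct' = klein_distinct[THEN not_sym]

lemma klein_mult_table:
  "b \<otimes> a = a \<otimes> b" "a \<otimes> (a \<otimes> b) = b" "b \<otimes> (a \<otimes> b) = a" "(a \<otimes> b) \<otimes> a = b" "(a \<otimes> b) \<otimes> b = a"
  using a_in_carrier b_in_carrier by (simp_all add: m_comm m_lcomm m_assoc)

lemma carrier_cases: "x \<in> carrier G \<Longrightarrow> x = \<one> \<or> x = a \<or> x = b \<or> x = a \<otimes> b"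
  using carrier_eq by auto

definition coord_a :: "'g \<Rightarrow> bool" where "coord_a x \<longleftrightarrow> x = a \<or> x = a \<otimes> b"
definition coord_b :: "'g \<Rightarrow> bool" where "coord_b x \<longleftrightarrow> x = b \<or> x = a \<otimes> b"

text \<open>The determinant mod 2 of the coordinate vectors in the basis \<open>a, b\<close> is bilinear and
  alternating, so counting pairs with \<open>det2\<close> true modulo 2 factors through \<open>G \<and> G\<close>.\<close>
definition det2 :: "'g \<Rightarrow> 'g \<Rightarrow> bool" where
  "det2 x y \<longleftrightarrow> (coord_a x \<and> coord_b y) \<noteq> (coord_b x \<and> coord_a y)"

lemma coord_mult:
  assumes "x \<in> carrier G" "y \<in> carrier G"
  shows "coord_a (x \<otimes> y) \<longleftrightarrow> coord_a x \<noteq> coord_a y" "coord_b (x \<otimes> y) \<longleftrightarrow> coord_b x \<noteq> coord_b y"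
  using carrier_cases[OF assms(1)] carrier_cases[OF assms(2)] a_in_carrier b_in_carrier
  by (elim disjE; simp add: coord_a_def coord_b_def klein_distinct klein_distinct' klein_mult_table)+

lemma det2_mult_left: "x \<in> carrier G \<Longrightarrow> y \<in> carrier G \<Longrightarrow> det2 (x \<otimes> y) z \<longleftrightarrow> det2 x z \<noteq> det2 y z"
  and det2_mult_right: "x \<in> carrier G \<Longrightarrow> y \<in> carrier G \<Longrightarrow> det2 z (x \<otimes> y) \<longleftrightarrow> det2 z x \<noteq> det2 z y"
  unfolding det2_def using coord_mult by auto

definition det2_count :: "('g \<times> 'g \<Rightarrow>\<^sub>0 int) \<Rightarrow> int" where
  "det2_count c = Poly_Mapping.lookup (frag_extend (\<lambda>k. if det2 (fst k) (snd k) then frag_of () else 0) c) ()"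

lemma det2_count_simps:
  "det2_count (c + d) = det2_count c + det2_count d" "det2_count (c - d) = det2_count c - det2_count d"
  "det2_count (- c) = - det2_count c" "det2_count 0 = 0"
  "det2_count (frag_of (x, y)) = (if det2 x y then 1 else 0)"
  by (simp_all add: det2_count_def frag_extend_add frag_extend_diff frag_extend_minus lookup_add lookup_minus)

lemma det2_self: "\<not> det2 x x"
  by (auto simp: det2_def)

lemma even_det2_count_wedge_rels: "c \<in> WN \<Longrightarrow> even (det2_count c)"
proof (induction rule: generate.induct)
  case (incl h)
  then show ?case
    unfolding wedge_relators_def
    by (auto simp: det2_count_simps det2_mult_left det2_mult_right det2_self)
next
  case (inv h)
  then have "inv\<^bsub>WF\<^esub> h = - h" using wedge_relators_subset by auto
  then show ?case
    using inv unfolding wedge_relators_def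
    by (auto simp: det2_count_simps det2_mult_left det2_mult_right det2_self)
qed (simp_all add: det2_count_simps)

definition all_letters :: "('g \<times> bool) list" where
  "all_letters = letters [\<one>, a, b, a \<otimes> b]"

text \<open>The wedge part of \<open>all_letters\<close> is \<open>b \<and> (a + b) = b \<and> a\<close>, which has determinant 1.\<close>
lemma odd_det2_count_all_letters: "odd (det2_count (word_wedge all_letters))"
  using a_in_carrier b_in_carrier
  by (simp add: all_letters_def det2_count_simps det2_def coord_a_def coord_b_def klein_distinct
      klein_distinct' klein_mult_table)

lemma zero_sum_even_subsets:
  assumes "P \<subseteq> carrier G" "finprod G (\<lambda>x. x) P = \<one>" "even (card P)"
  shows "P = {} \<or> P = carrier G"
proof -
  have "P \<in> Pow {\<one>, a, b, a \<otimes> b}" using assms(1) carrier_eq by simp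
  then have "P \<in> {{}, {\<one>}, {a}, {b}, {a \<otimes> b}, {\<one>, a}, {\<one>, b}, {\<one>, a \<otimes> b}, {a, b}, {a, a \<otimes> b},
      {b, a \<otimes> b}, {\<one>, a, b}, {\<one>, a, a \<otimes> b}, {\<one>, b, a \<otimes> b}, {a, b, a \<otimes> b}, {\<one>, a, b, a \<otimes> b}}"
    by (simp add: Pow_insert insert_commute)
  then show ?thesis
    using assms(2,3) a_in_carrier b_in_carrier carrier_eq by (auto simp: klein_distinct klein_distinct' klein_mult_table)
qed

lemma inj_phi_map_klein: "inj_on (phi_map G (carrier G)) (carrier (U_group G (carrier G)))"
proof (rule inj_phi_map_if_kernel_trivial)
  fix w assume w: "T_word w" "word_image w = \<one>\<^bsub>Big\<^esub>"
  have "odd_letters w \<subseteq> carrier G"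
    using odd_letters_subset[of w] w(1) by (auto simp: T_word_def)
  then consider "odd_letters w = {}" | "odd_letters w = carrier G"
    using zero_sum_even_subsets word_image_eq_oneD[OF w] by blast
  then show "odd_letters w = {}"
  proof cases
    case 2
    have "distinct [\<one>, a, b, a \<otimes> b]"
      using klein_distinct klein_distinct' by simp
    then have "odd_letters all_letters = carrier G"
      unfolding all_letters_def odd_letters_letters_distinct[OF \<open>distinct _\<close>] carrier_eq
      by simp
    moreover have "T_word all_letters"
      using a_in_carrier b_in_carrier by (simp add: all_letters_def)
    ultimately have all: "T_word all_letters" "odd_letters all_letters = carrier G"
      by simp_all
    then have "word_image all_letters = \<one>\<^bsub>Big\<^esub>"
      using w 2 pres_eq_if_odd_letters_eq word_image_pres_eq by metis
    then have "word_wedge all_letters \<in> WN"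
      using word_image_eq_oneD(1)[OF all(1)] all(1) by (simp add: wclass_eq_one_iff)
    then show ?thesis
      using even_det2_count_wedge_rels odd_det2_count_all_letters by blast
  qed
qed

end

lemma (in ea2_group) klein_if_dim_2:
  assumes "f2_dim G 2"
  obtains a b where "ea2_klein G a b"
proof -
  obtain B where B: "f2_basis G B" "finite B" "card B = 2"
    using assms by (auto simp: f2_dim_def)
  then obtain x y where xy: "B = {x, y}" "x \<noteq> y" by (auto simp: card_2_iff)
  have c: "x \<in> carrier G" "y \<in> carrier G"
    using B(1) xy by (auto simp: f2_basis_def f2_independent_def)
  have ind: "finprod G (\<lambda>x. x) S \<noteq> \<one>" if "S \<subseteq> B" "S \<noteq> {}" for S
    using B(1) that finite_subset[OF that(1) B(2)] by (simp add: f2_basis_def f2_independent_def)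
  have "x \<noteq> \<one>" "y \<noteq> \<one>" using ind[of "{x}"] ind[of "{y}"] xy c by auto
  moreover have "carrier G = {\<one>, x, y, x \<otimes> y}"
  proof
    have "finprod G (\<lambda>x. x) S \<in> {\<one>, x, y, x \<otimes> y}" if "S \<subseteq> {x, y}" for S
    proof -
      have "S \<in> {{}, {x}, {y}, {x, y}}" using that by (auto simp: Pow_insert insert_commute)
      then show ?thesis using c xy by auto
    qed
    then show "carrier G \<subseteq> {\<one>, x, y, x \<otimes> y}"
      using carrier_subset_finprod_basis[OF B(1,2)] xy by auto
  qed (use c in auto)
  ultimately have "ea2_klein G x y"
    using c xy by (intro ea2_klein.intro ea2_group_axioms ea2_klein_axioms.intro)
  then show ?thesis by (rule that)
qed

lemma (in ea2_generators) phi_map_iso_if_dim_le_2: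
  assumes TG: "T = carrier G" and dim: "f2_dim G n" "n \<le> 2"
  shows "phi_map G T \<in> iso (U_group G T) (W_group G T)"
proof (cases "n \<le> 1")
  case True
  then have "f2_basis G (T - {\<one>})"
    using f2_basis_carrier_if_dim_le_1 dim TG by simp
  then show ?thesis by (simp add: phi_map_iso_iff_inj inj_phi_map_if_basis)
next
  case False
  then obtain a b where "ea2_klein G a b"
    using klein_if_dim_2 dim by (metis le_antisym not_less_eq_eq numeral_2_eq_2 One_nat_def)
  then show ?thesis
    unfolding phi_map_iso_iff_inj using TG ea2_klein.inj_phi_map_klein by simp
qed

theorem corollary4p5:
  fixes G :: "('g, 'b) monoid_scheme" and T :: "'g set"
  assumes "elem_abelian_2group G"
    and "T \<subseteq> carrier G"
    and "generate G T = carrier G"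
    and "\<one>\<^bsub>G\<^esub> \<in> T"
  shows "(f2_basis G (T - {\<one>\<^bsub>G\<^esub>}) \<longrightarrow> inj_on (phi_map G T) (carrier (U_group G T)))
    \<and> (\<forall>n. f2_dim G n \<and> real (card (T - {\<one>\<^bsub>G\<^esub>})) > real n * (real n + 1) / 2
           \<longrightarrow> \<not> inj_on (phi_map G T) (carrier (U_group G T)))
    \<and> (T = carrier G \<longrightarrow>
         (phi_map G T \<in> iso (U_group G T) (W_group G T) \<longleftrightarrow> (\<exists>n. f2_dim G n \<and> n \<le> 2)))"
proof -
  interpret ea2_generators G T
    using assms(1,2) by unfold_locales
  have "phi_map G T \<in> iso (U_group G T) (W_group G T) \<longleftrightarrow> (\<exists>n. f2_dim G n \<and> n \<le> 2)"
    if "T = carrier G"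
    using that phi_map_iso_iff_inj f2_dim_le_2_if_inj_phi_map phi_map_iso_if_dim_le_2 by blast
  then show ?thesis
    using inj_phi_map_if_basis not_inj_phi_map_if_large[OF assms(4)] by blast
qed

end
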